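(* Let $\Gamma_M$ be a perfect matching graph representing a planar trivalent graph $G$ with perfect matching $M$, and let $\widetilde\Gamma_M$ be obtained from $\Gamma_M$ by a flip move (with the same ordering of matching edges). Then the hypercube of states of $\Gamma_M$ contains a bad face if and only if the hypercube of states of $\widetilde\Gamma_M$ contains a bad face.
   Context: A perfect matching graph $\Gamma_M$ is an embedding in $S^2$ of a planar trivalent graph $G$ together with a perfect matching $M$; fix an ordering $M_1,\dots,M_n$ of the edges of $M$. Resolution configurations: $D=(Z(D),A(D))$ with $Z(D)$ a finite set of circles immersed in $S^2$ (union has only transverse double points) and $A(D)$ a finite totally ordered set of disjoint embedded arcs meeting the circles exactly in their endpoints. Surgery $s_A(D)$ along $A$: in a small disk around $A$ meeting the circles in segments $\alpha$ (ends $z,w$) and $\beta$ (ends $x,y$), $z,x$ on one side of $A$ and $w,y$ on the other, replace $\alpha\cup\beta$ by strands $z$–$y$ and $x$–$w$ crossing once transversally; arcs become $A(D)\setminus\{A\}$. An arc is an $\eta$-, $\Delta$-, or $m$-arc according as surgery along it changes the number of circles by $0,+1,-1$. Resolutions: for a matching edge $e=uv$, let $a,b$ be the other edges at $u$ and $c,d$ those at $v$, with $a,c$ on the same side of $e$. The $0$-resolution removes $u,v,e$, joins $a$–$c$ and $b$–$d$ by disjoint strands parallel to $e$, and places an arc joining these two strands; the $1$-resolution joins $a$–$d$ and $b$–$c$ by strands crossing once, with no arc. For $v\in\{0,1\}^n$, $D_{\Gamma_M}(v)$ takes the $v_i$-resolution at $M_i$; its arcs $A_i$ (for $v_i=0$)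 are ordered by $i$. Bad face: states $v,u\in\{0,1\}^n$ differing exactly in two coordinates $i\neq j$ with $v_i=v_j=0$, $u_i=u_j=1$, such that (for some ordering of $\{i,j\}$) $A_i$ is an $\eta$-arc of $D_{\Gamma_M}(v)$, $A_j$ is an $\eta$-arc of $s_{A_i}(D_{\Gamma_M}(v))$, $A_j$ is a $\Delta$-arc of $D_{\Gamma_M}(v)$, and $A_i$ is an $m$-arc of $s_{A_j}(D_{\Gamma_M}(v))$ (a face where $m\circ\Delta=\eta\circ\eta$). Flip move: choose a closed disk $B\subset S^2$ whose boundary avoids vertices and meets $\Gamma_M$ transversally in $k\in\{0,1,2\}$ points in interiors of edges; replace $\Gamma_M\cap B$ by its image under a reflection of $B$ fixing those $k$ points ($k$-flip). *)

theory Defs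
  imports "HOL-Combinatorics.Permutations"
begin

text \<open>Darts of type 'd form the finite set D; alpha is the fixed-point-free edge involution
  (the two half-edges of an edge), sigma is the counterclockwise rotation of darts around
  their common vertex (vertices = sigma-orbits, all of size 3 = trivalence).
  Faces are the orbits of sigma o alpha.\<close>

definition trivalent_map :: "'d set \<Rightarrow> ('d \<Rightarrow> 'd) \<Rightarrow> ('d \<Rightarrow> 'd) \<Rightarrow> bool" where
  "trivalent_map D \<alpha> \<sigma> \<longleftrightarrow> finite D \<and> \<alpha> permutes D \<and> \<sigma> permutes D \<and>
     (\<forall>x\<in>D. \<alpha> x \<noteq> x \<and> \<alpha> (\<alpha> x) = x) \<and>
     (\<forall>x\<in>D. \<sigma> x \<noteq> x \<and> \<sigma> (\<sigma> (\<sigma> x)) = x)"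

definition orb_rel :: "('d \<Rightarrow> 'd) \<Rightarrow> 'd set \<Rightarrow> ('d \<times> 'd) set" where
  "orb_rel f A = {(x, y). x \<in> A \<and> y \<in> A \<and> (\<exists>k. (f ^^ k) x = y)}"

definition num_orbits :: "('d \<Rightarrow> 'd) \<Rightarrow> 'd set \<Rightarrow> nat" where
  "num_orbits f A = card (A // orb_rel f A)"

definition conn_rel :: "'d set \<Rightarrow> ('d \<Rightarrow> 'd) \<Rightarrow> ('d \<Rightarrow> 'd) \<Rightarrow> ('d \<times> 'd) set" where
  "conn_rel D \<alpha> \<sigma> = ({(x, y). x \<in> D \<and> y \<in> D \<and> (y = \<alpha> x \<or> y = \<sigma> x \<or> x = \<sigma> y)})\<^sup>*"

text \<open>Planarity (embedding in S^2): every connected component has Euler characteristic 2,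
  i.e. #vertices - #edges + #faces = 2.\<close>
definition planar_map :: "'d set \<Rightarrow> ('d \<Rightarrow> 'd) \<Rightarrow> ('d \<Rightarrow> 'd) \<Rightarrow> bool" where
  "planar_map D \<alpha> \<sigma> \<longleftrightarrow> trivalent_map D \<alpha> \<sigma> \<and>
     (\<forall>C \<in> D // conn_rel D \<alpha> \<sigma>.
        int (num_orbits \<sigma> C) - int (num_orbits \<alpha> C) + int (num_orbits (\<sigma> \<circ> \<alpha>) C) = 2)"

text \<open>The matching: the list ms gives, for each i < length ms, a dart ms!i of the i-th
  matching edge M_i = {ms!i, alpha (ms!i)}.\<close>
definition match_darts :: "('d \<Rightarrow> 'd) \<Rightarrow> 'd list \<Rightarrow> 'd set" where
  "match_darts \<alpha> ms = (\<Union>i<length ms. {ms ! i, \<alpha> (ms ! i)})"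

definition pm_graph :: "'d set \<Rightarrow> ('d \<Rightarrow> 'd) \<Rightarrow> ('d \<Rightarrow> 'd) \<Rightarrow> 'd list \<Rightarrow> bool" where
  "pm_graph D \<alpha> \<sigma> ms \<longleftrightarrow> planar_map D \<alpha> \<sigma> \<and> set ms \<subseteq> D \<and>
     (\<forall>i<length ms. \<forall>j<length ms. i \<noteq> j \<longrightarrow> ms ! j \<notin> {ms ! i, \<alpha> (ms ! i)}) \<and>
     (\<forall>x\<in>D. \<exists>!y. y \<in> {x, \<sigma> x, \<sigma> (\<sigma> x)} \<and> y \<in> match_darts \<alpha> ms)"

text \<open>Circles of the resolution configuration D(v) for a state v (v i = True means the
  1-resolution at M_i).  The circles are traced along the non-matching edges; at the
  matching edge M_i = uv with dart h at u and h' = alpha h at v, the other darts are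
  a = sigma h, b = sigma^2 h at u and d = sigma h', c = sigma^2 h' at v (a, c on the same
  side of the edge).  The 0-resolution joins a-c and b-d, the 1-resolution joins a-d and b-c.\<close>
definition res_link :: "'d set \<Rightarrow> ('d \<Rightarrow> 'd) \<Rightarrow> ('d \<Rightarrow> 'd) \<Rightarrow> 'd list \<Rightarrow> (nat \<Rightarrow> bool)
    \<Rightarrow> ('d \<times> 'd) set" where
  "res_link D \<alpha> \<sigma> ms v =
     {(x, y). x \<in> D - match_darts \<alpha> ms \<and> y \<in> D - match_darts \<alpha> ms \<and>
        (y = \<alpha> x \<or>
         (\<exists>i<length ms. \<exists>h \<in> {ms ! i, \<alpha> (ms ! i)}.
            (x = \<sigma> h \<and> y = (if v i then \<sigma> (\<alpha> h) else \<sigma> (\<sigma> (\<alpha> h)))) \<or>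
            (x = \<sigma> (\<sigma> h) \<and> y = (if v i then \<sigma> (\<sigma> (\<alpha> h)) else \<sigma> (\<alpha> h)))))}"

definition num_circles :: "'d set \<Rightarrow> ('d \<Rightarrow> 'd) \<Rightarrow> ('d \<Rightarrow> 'd) \<Rightarrow> 'd list \<Rightarrow> (nat \<Rightarrow> bool)
    \<Rightarrow> int" where
  "num_circles D \<alpha> \<sigma> ms v =
     int (card ((D - match_darts \<alpha> ms) // (res_link D \<alpha> \<sigma> ms v)\<^sup>*))"

text \<open>Surgery along the arc A_i of D(v) (v i = False) gives D(v with v i = True).
  Arc types: eta (circle count unchanged), Delta (+1), m (-1).\<close>
definition eta_arc where
  "eta_arc D \<alpha> \<sigma> ms v i \<longleftrightarrow> num_circles D \<alpha> \<sigma> ms (v(i := True)) = num_circles D \<alpha> \<sigma> ms v"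
definition Delta_arc where
  "Delta_arc D \<alpha> \<sigma> ms v i \<longleftrightarrow> num_circles D \<alpha> \<sigma> ms (v(i := True)) = num_circles D \<alpha> \<sigma> ms v + 1"
definition m_arc where
  "m_arc D \<alpha> \<sigma> ms v i \<longleftrightarrow> num_circles D \<alpha> \<sigma> ms (v(i := True)) = num_circles D \<alpha> \<sigma> ms v - 1"

definition has_bad_face :: "'d set \<Rightarrow> ('d \<Rightarrow> 'd) \<Rightarrow> ('d \<Rightarrow> 'd) \<Rightarrow> 'd list \<Rightarrow> bool" where
  "has_bad_face D \<alpha> \<sigma> ms \<longleftrightarrow>
     (\<exists>v i j. i < length ms \<and> j < length ms \<and> i \<noteq> j \<and> \<not> v i \<and> \<not> v j \<and>
        (eta_arc D \<alpha> \<sigma> ms v i \<and> eta_arc D \<alpha> \<sigma> ms (v(i := True)) j \<and>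
         Delta_arc D \<alpha> \<sigma> ms v j \<and> m_arc D \<alpha> \<sigma> ms (v(j := True)) i))"

text \<open>Flip move: reflect a disk containing exactly the vertices (sigma-closed dart set) S,
  whose boundary meets the graph in at most 2 points; combinatorially the rotation at every
  vertex in S is reversed (sigma^-1 = sigma^2 on S).\<close>
definition flip_move :: "'d set \<Rightarrow> ('d \<Rightarrow> 'd) \<Rightarrow> ('d \<Rightarrow> 'd) \<Rightarrow> ('d \<Rightarrow> 'd) \<Rightarrow> bool" where
  "flip_move D \<alpha> \<sigma> \<sigma>' \<longleftrightarrow>
     (\<exists>S. S \<subseteq> D \<and> (\<forall>x\<in>S. \<sigma> x \<in> S) \<and> card {x \<in> S. \<alpha> x \<notin> S} \<le> 2 \<and>
          (\<forall>x. \<sigma>' x = (if x \<in> S then \<sigma> (\<sigma> x) else \<sigma> x)))"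

end

theory Submission
  imports Defs
begin

(* Combinatorially the flip reverses the rotation at the vertices of S.  At a matching edge with
   both or no ends in S this only relabels the two strands of each resolution; at an edge crossing
   the boundary it exchanges the 0- and the 1-resolution.  So the flipped graph in state v has as
   many circles as the original one in the state obtained by toggling the crossing edges, and it
   suffices to show that this toggling preserves the number of circles: then every arc keeps its
   type and bad faces correspond.

   At most two matching edges cross the boundary, and if one does, no other edge does, because the
   non-matching darts in S come in pairs at their vertices.  Remove the strands at the crossing
   edges: the remaining arcs join the ports (the strand ends at crossing edges) inside S among
   themselves and those outside among themselves, and each of their components contains an even
   number of ports.  Toggling amounts to exchanging the two outer ports of every crossing edge.
   With at most four outer ports, evenness makes the partition of the outer ports induced by the
   arcs invariant under this exchange, and the number of components only depends on these
   partitions. *)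

section \<open>Parity of involutions\<close>

lemma even_card_involution:
  assumes "finite Y" and "\<And>x. x \<in> Y \<Longrightarrow> f x \<in> Y \<and> f x \<noteq> x \<and> f (f x) = x"
  shows "even (card Y)"
  using assms
proof (induction "card Y" arbitrary: Y rule: less_induct)
  case less
  show ?case
  proof (cases "Y = {}")
    case False
    then obtain x where x: "x \<in> Y" by blast
    let ?Y = "Y - {x, f x}"
    have fx: "f x \<in> Y" "f x \<noteq> x" using less.prems(2)[OF x] by auto
    have "card {x, f x} \<le> card Y" using less.prems(1) x fx by (intro card_mono) auto
    then have card_Y: "card Y = card ?Y + 2"
      using less.prems(1) x fx by (simp add: card_Diff_subset)
    have "\<And>y. y \<in> ?Y \<Longrightarrow> f y \<in> ?Y \<and> f y \<noteq> y \<and> f (f y) = y"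
      using less.prems(2) x by (metis Diff_iff insertCI insertE singletonD)
    then have "even (card ?Y)" using less.hyps[of ?Y] card_Y less.prems(1) by simp
    then show ?thesis using card_Y by simp
  qed simp
qed

lemma even_card_iff_even_card_leaving:
  assumes "finite Y" and "\<And>x. x \<in> Y \<Longrightarrow> f x \<noteq> x \<and> f (f x) = x"
  shows "even (card Y) \<longleftrightarrow> even (card {x \<in> Y. f x \<notin> Y})"
proof -
  have "even (card {x \<in> Y. f x \<in> Y})"
    using assms by (intro even_card_involution[of _ f]) auto
  moreover have "card Y = card {x \<in> Y. f x \<in> Y} + card {x \<in> Y. f x \<notin> Y}"
    using assms(1) by (subst card_Un_disjoint[symmetric]) (auto intro: arg_cong[where f = card])
  ultimately show ?thesis by simp
qed

section \<open>Components after adding links between ports\<close>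

lemma equiv_UNIV_rtrancl: "sym R \<Longrightarrow> equiv UNIV (R\<^sup>*)"
  by (simp add: equiv_def refl_rtrancl sym_rtrancl trans_rtrancl)

lemma quotient_eq_image: "A // r = (\<lambda>x. r `` {x}) ` A"
  unfolding quotient_def by blast

lemma card_image_eq_if_same_fibres:
  assumes "\<And>x y. x \<in> A \<Longrightarrow> y \<in> A \<Longrightarrow> g x = g y \<longleftrightarrow> h x = h y"
  shows "card (g ` A) = card (h ` A)"
proof (rule bij_betw_same_card)
  have h_inv: "h (inv_into A g (g x)) = h x" if "x \<in> A" for x
    using assms[of "inv_into A g (g x)" x] that by (simp add: inv_into_into f_inv_into_f)
  show "bij_betw (h \<circ> inv_into A g) (g ` A) (h ` A)"
  proof (rule bij_betw_imageI)
    show "inj_on (h \<circ> inv_into A g) (g ` A)"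
      using assms h_inv by (auto intro!: inj_onI)
    show "(h \<circ> inv_into A g) ` g ` A = h ` A"
      using h_inv by (simp add: image_image)
  qed
qed

lemma card_quotient_eq_if_bij_betw:
  assumes "bij_betw f A B" and "equiv UNIV r" and "equiv UNIV r'"
    and "\<And>x y. x \<in> A \<Longrightarrow> y \<in> A \<Longrightarrow> (x, y) \<in> r \<longleftrightarrow> (f x, f y) \<in> r'"
  shows "card (A // r) = card (B // r')"
proof -
  have "B // r' = (\<lambda>x. r' `` {f x}) ` A"
    using bij_betw_imp_surj_on[OF assms(1)] by (auto simp: quotient_eq_image)
  moreover have "card ((\<lambda>x. r `` {x}) ` A) = card ((\<lambda>x. r' `` {f x}) ` A)"
    using assms(2-4) by (intro card_image_eq_if_same_fibres) (simp add: eq_equiv_class_iff)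
  ultimately show ?thesis by (simp add: quotient_eq_image)
qed

lemma rtrancl_Un_from_port:
  assumes "L \<subseteq> P \<times> P" and "(p, y) \<in> (R \<union> L)\<^sup>*" and "p \<in> P"
  obtains p' where "p' \<in> P" "(p, p') \<in> (R\<^sup>* \<inter> P \<times> P \<union> L)\<^sup>*" "(p', y) \<in> R\<^sup>*"
  using assms(2)
proof (induction arbitrary: thesis rule: rtrancl_induct)
  case base
  then show ?case using assms(3) by blast
next
  case (step y z)
  obtain p' where p': "p' \<in> P" "(p, p') \<in> (R\<^sup>* \<inter> P \<times> P \<union> L)\<^sup>*" "(p', y) \<in> R\<^sup>*"
    using step.IH by blast
  from step.hyps(2) show ?case
  proof
    assume "(y, z) \<in> R"
    then show ?thesis using step.prems p' by (meson rtrancl.rtrancl_into_rtrancl)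
  next
    assume yz: "(y, z) \<in> L"
    then have "(p', y) \<in> R\<^sup>* \<inter> P \<times> P" "(y, z) \<in> L" "z \<in> P" using assms(1) p' by auto
    then have "(p, z) \<in> (R\<^sup>* \<inter> P \<times> P \<union> L)\<^sup>*"
      using p'(2) by (meson UnI1 UnI2 rtrancl.rtrancl_into_rtrancl)
    then show ?thesis using step.prems \<open>z \<in> P\<close> by blast
  qed
qed

lemma rtrancl_Un_avoiding_ports:
  assumes "L \<subseteq> P \<times> P" and "(x, y) \<in> (R \<union> L)\<^sup>*" and "R\<^sup>* `` {x} \<inter> P = {}"
  shows "(x, y) \<in> R\<^sup>*"
  using assms(2)
proof (induction rule: rtrancl_induct)
  case (step y z)
  then show ?case using assms(1,3) by (auto intro: rtrancl_into_rtrancl)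
qed simp

lemma card_quotient_rtrancl_Un_ports:
  assumes "finite X" and "sym R" and "sym L" and "L \<subseteq> P \<times> P" and "P \<subseteq> X"
  shows "card (X // (R \<union> L)\<^sup>*) = card {K \<in> X // R\<^sup>*. K \<inter> P = {}} + card (P // (R \<union> L)\<^sup>*)"
proof -
  have equiv: "equiv UNIV ((R \<union> L)\<^sup>*)" using assms(2,3) by (intro equiv_UNIV_rtrancl sym_Un)
  have mono: "R\<^sup>* \<subseteq> (R \<union> L)\<^sup>*" by (simp add: rtrancl_mono)
  have avoiding: "(R \<union> L)\<^sup>* `` {x} = R\<^sup>* `` {x}" if "R\<^sup>* `` {x} \<inter> P = {}" for x
    using rtrancl_Un_avoiding_ports[OF assms(4) _ that] mono by blast
  have split: "X // (R \<union> L)\<^sup>* = P // (R \<union> L)\<^sup>* \<union> {K \<in> X // R\<^sup>*. K \<inter> P = {}}"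
  proof (intro equalityI subsetI)
    fix K assume "K \<in> X // (R \<union> L)\<^sup>*"
    then obtain x where x: "x \<in> X" "K = (R \<union> L)\<^sup>* `` {x}" by (auto simp: quotient_eq_image)
    show "K \<in> P // (R \<union> L)\<^sup>* \<union> {K \<in> X // R\<^sup>*. K \<inter> P = {}}"
    proof (cases "K \<inter> P = {}")
      case True
      then have "R\<^sup>* `` {x} \<inter> P = {}" using x(2) mono by blast
      then show ?thesis using True x avoiding by (auto simp: quotient_eq_image)
    next
      case False
      then obtain p where "p \<in> P" "(x, p) \<in> (R \<union> L)\<^sup>*" using x(2) by blast
      then have "K = (R \<union> L)\<^sup>* `` {p}" using x(2) equiv by (simp add: equiv_class_eq)
      then show ?thesis using \<open>p \<in> P\<close> by (auto simp: quotient_eq_image)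
    qed
  next
    fix K assume "K \<in> P // (R \<union> L)\<^sup>* \<union> {K \<in> X // R\<^sup>*. K \<inter> P = {}}"
    then show "K \<in> X // (R \<union> L)\<^sup>*"
      using assms(5) avoiding by (auto simp: quotient_eq_image)
  qed
  have "P // (R \<union> L)\<^sup>* \<inter> {K \<in> X // R\<^sup>*. K \<inter> P = {}} = {}"
    by (auto simp: quotient_eq_image)
  moreover have "finite (P // (R \<union> L)\<^sup>*)" "finite (X // R\<^sup>*)"
    using assms(1,5) finite_subset by (auto simp: quotient_eq_image)
  ultimately show ?thesis by (simp add: split card_Un_disjoint add.commute)
qed

lemma rtrancl_Un_port_swap:
  assumes "L \<subseteq> P \<times> P" and "p \<in> P" and "q \<in> P" and "(p, q) \<in> (R \<union> L)\<^sup>*"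
    and "\<And>x y. x \<in> P \<Longrightarrow> y \<in> P \<Longrightarrow> (x, y) \<in> R\<^sup>* \<Longrightarrow> (\<tau> x, \<tau> y) \<in> R\<^sup>*"
  shows "(\<tau> p, \<tau> q) \<in> (R \<union> map_prod \<tau> \<tau> ` L)\<^sup>*"
proof -
  obtain p' where "p' \<in> P" "(p, p') \<in> (R\<^sup>* \<inter> P \<times> P \<union> L)\<^sup>*" "(p', q) \<in> R\<^sup>*"
    using rtrancl_Un_from_port[OF assms(1,4,2)] .
  then have "(p, q) \<in> (R\<^sup>* \<inter> P \<times> P \<union> L)\<^sup>*"
    using assms(3) by (meson IntI SigmaI UnI1 rtrancl.rtrancl_into_rtrancl)
  then show ?thesis
  proof (induction rule: rtrancl_induct)
    case (step y z)
    have "(\<tau> y, \<tau> z) \<in> (R \<union> map_prod \<tau> \<tau> ` L)\<^sup>*"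
      using step.hyps(2) assms(5) rtrancl_mono[of R "R \<union> map_prod \<tau> \<tau> ` L"] by auto
    with step.IH show ?case by (rule rtrancl_trans)
  qed simp
qed

lemma card_quotient_rtrancl_Un_port_swap:
  assumes "finite X" and "sym R" and "sym L" and "L \<subseteq> P \<times> P" and "P \<subseteq> X"
    and "\<And>x. x \<in> P \<Longrightarrow> \<tau> x \<in> P" and "\<And>x. \<tau> (\<tau> x) = x"
    and "\<And>x y. x \<in> P \<Longrightarrow> y \<in> P \<Longrightarrow> (x, y) \<in> R\<^sup>* \<Longrightarrow> (\<tau> x, \<tau> y) \<in> R\<^sup>*"
  shows "card (X // (R \<union> map_prod \<tau> \<tau> ` L)\<^sup>*) = card (X // (R \<union> L)\<^sup>*)"
proof -
  let ?L' = "map_prod \<tau> \<tau> ` L"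
  have L': "sym ?L'" "?L' \<subseteq> P \<times> P" "map_prod \<tau> \<tau> ` ?L' = L"
    using assms(3,4,6,7) by (auto simp: sym_def image_iff) (metis map_prod_simp)+
  have "bij_betw \<tau> P P" using assms(6,7) by (intro bij_betw_byWitness[of _ \<tau>]) auto
  moreover have "(p, q) \<in> (R \<union> L)\<^sup>* \<longleftrightarrow> (\<tau> p, \<tau> q) \<in> (R \<union> ?L')\<^sup>*" if "p \<in> P" "q \<in> P" for p q
  proof
    show "(p, q) \<in> (R \<union> L)\<^sup>* \<Longrightarrow> (\<tau> p, \<tau> q) \<in> (R \<union> ?L')\<^sup>*"
      using rtrancl_Un_port_swap[of L P p q R \<tau>] assms(4,8) that by blast
    assume "(\<tau> p, \<tau> q) \<in> (R \<union> ?L')\<^sup>*"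
    then have "(\<tau> (\<tau> p), \<tau> (\<tau> q)) \<in> (R \<union> map_prod \<tau> \<tau> ` ?L')\<^sup>*"
      using rtrancl_Un_port_swap[of ?L' P "\<tau> p" "\<tau> q" R \<tau>] L'(2) assms(6,8) that by blast
    then show "(p, q) \<in> (R \<union> L)\<^sup>*" by (simp only: assms(7) L'(3))
  qed
  ultimately have "card (P // (R \<union> L)\<^sup>*) = card (P // (R \<union> ?L')\<^sup>*)"
    using assms(2,3) L'(1) by (intro card_quotient_eq_if_bij_betw equiv_UNIV_rtrancl sym_Un)
  then show ?thesis
    using card_quotient_rtrancl_Un_ports[OF assms(1-5)]
      card_quotient_rtrancl_Un_ports[OF assms(1,2) L'(1,2) assms(5)]
    by simp
qed

lemma card_filter_four:
  assumes "distinct [a, b, c, d]"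
  shows "card {x \<in> {a, b, c, d}. P x} = of_bool (P a) + of_bool (P b) + of_bool (P c) + of_bool (P d)"
proof -
  have "{x \<in> {a, b, c, d}. P x} = (if P a then {a} else {}) \<union> (if P b then {b} else {}) \<union>
      (if P c then {c} else {}) \<union> (if P d then {d} else {})"
    by auto
  then show ?thesis
    using assms by (cases "P a"; cases "P b"; cases "P c"; cases "P d") (auto simp: card_insert_if)
qed

lemma swap_preserves_equiv_with_even_classes:
  assumes "equiv UNIV E" and "finite A" and "card A \<le> 4"
    and "\<And>z. z \<in> A \<Longrightarrow> \<tau> z \<in> A" and "\<And>z. z \<in> A \<Longrightarrow> \<tau> z \<noteq> z"
    and "\<And>z. z \<in> A \<Longrightarrow> \<tau> (\<tau> z) = z"
    and "\<And>z. z \<in> A \<Longrightarrow> even (card {w \<in> A. (z, w) \<in> E})"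
    and "x \<in> A" and "y \<in> A" and "(x, y) \<in> E"
  shows "(\<tau> x, \<tau> y) \<in> E"
proof -
  have refl: "(a, a) \<in> E" and sym: "(a, b) \<in> E \<Longrightarrow> (b, a) \<in> E"
    and trans: "(a, b) \<in> E \<Longrightarrow> (b, c) \<in> E \<Longrightarrow> (a, c) \<in> E"
    for a b c using assms(1) unfolding equiv_def refl_on_def sym_def trans_def by blast+
  consider "y = x" | "y = \<tau> x" | "distinct [x, y, \<tau> x, \<tau> y]"
  proof -
    have "\<tau> (\<tau> x) = x" "\<tau> (\<tau> y) = y" "\<tau> x \<noteq> x" "\<tau> y \<noteq> y" using assms(4-6,8,9) by auto
    then show ?thesis using that by (metis distinct_length_2_or_more distinct_singleton)
  qed
  then show ?thesis
  proof cases
    case 1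
    then show ?thesis using refl by simp
  next
    case 2
    then show ?thesis using assms(6,8,10) sym by auto
  next
    case 3
    have "{x, y, \<tau> x, \<tau> y} \<subseteq> A" using assms(4-6,8,9) by auto
    moreover have "card {x, y, \<tau> x, \<tau> y} = 4" using 3 by simp
    ultimately have A: "A = {x, y, \<tau> x, \<tau> y}" using assms(2,3) by (metis card_seteq)
    have "even (card {w \<in> A. (x, w) \<in> E})" "even (card {w \<in> A. (\<tau> x, w) \<in> E})"
      using assms(4,7,8) by blast+
    then have "even (of_bool ((x, x) \<in> E) + of_bool ((x, y) \<in> E) + of_bool ((x, \<tau> x) \<in> E) +
        of_bool ((x, \<tau> y) \<in> E) :: nat)"
      and "even (of_bool ((\<tau> x, x) \<in> E) + of_bool ((\<tau> x, y) \<in> E) + of_bool ((\<tau> x, \<tau> x) \<in> E) +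
        of_bool ((\<tau> x, \<tau> y) \<in> E) :: nat)"
      unfolding A card_filter_four[OF 3] .
    then have parity_x: "(x, \<tau> x) \<in> E \<longleftrightarrow> (x, \<tau> y) \<in> E"
      and parity_\<tau>x: "(\<tau> x, x) \<in> E \<or> (\<tau> x, y) \<in> E \<or> (\<tau> x, \<tau> y) \<in> E"
      using refl[of x] refl[of "\<tau> x"] assms(10) by (auto simp: of_bool_def split: if_splits)
    show ?thesis
    proof (cases "(x, \<tau> x) \<in> E")
      case True
      then show ?thesis using parity_x sym trans by blast
    next
      case False
      then show ?thesis using parity_\<tau>x assms(10) sym trans by blast
    qed
  qed
qed

section \<open>Resolutions of a perfect matching graph\<close>

definition link_pairs :: "'a \<Rightarrow> 'a \<Rightarrow> 'a \<Rightarrow> 'a \<Rightarrow> ('a \<times> 'a) set" where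
  "link_pairs a a' c c' = {(a, c), (c, a), (a', c'), (c', a')}"

lemma link_pairs_swap: "link_pairs a a' c c' = link_pairs a' a c' c"
  unfolding link_pairs_def by auto

lemma image_map_prod_link_pairs:
  "map_prod f f ` link_pairs a a' c c' = link_pairs (f a) (f a') (f c) (f c')"
  unfolding link_pairs_def by auto

definition res_pairs :: "('a \<Rightarrow> 'a) \<Rightarrow> ('a \<Rightarrow> 'a) \<Rightarrow> 'a list \<Rightarrow> nat \<Rightarrow> bool \<Rightarrow> ('a \<times> 'a) set" where
  "res_pairs \<alpha> \<sigma> ms i b = {(x, y). \<exists>h \<in> {ms ! i, \<alpha> (ms ! i)}.
     (x = \<sigma> h \<and> y = (if b then \<sigma> (\<alpha> h) else \<sigma> (\<sigma> (\<alpha> h)))) \<or>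
     (x = \<sigma> (\<sigma> h) \<and> y = (if b then \<sigma> (\<sigma> (\<alpha> h)) else \<sigma> (\<alpha> h)))}"

lemma res_link_eq_res_pairs:
  "res_link D \<alpha> \<sigma> ms v = {(x, y). x \<in> D - match_darts \<alpha> ms \<and> y \<in> D - match_darts \<alpha> ms \<and>
     (y = \<alpha> x \<or> (\<exists>i < length ms. (x, y) \<in> res_pairs \<alpha> \<sigma> ms i (v i)))}"
  unfolding res_link_def res_pairs_def by blast

lemma res_pairs_eq_link_pairs:
  assumes "\<alpha> (\<alpha> m) = m" and "m = ms ! i"
  shows "res_pairs \<alpha> \<sigma> ms i b =
    (if b then link_pairs (\<sigma> m) (\<sigma> (\<sigma> m)) (\<sigma> (\<alpha> m)) (\<sigma> (\<sigma> (\<alpha> m)))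
     else link_pairs (\<sigma> m) (\<sigma> (\<sigma> m)) (\<sigma> (\<sigma> (\<alpha> m))) (\<sigma> (\<alpha> m)))"
  using assms unfolding res_pairs_def link_pairs_def by (cases b) auto

locale perfect_matching_graph =
  fixes D :: "'a set" and \<alpha> \<sigma> :: "'a \<Rightarrow> 'a" and ms :: "'a list"
  assumes pm_graph: "pm_graph D \<alpha> \<sigma> ms"
begin

abbreviation "MD \<equiv> match_darts \<alpha> ms"
abbreviation "ND \<equiv> D - MD"
abbreviation "n \<equiv> length ms"

lemma trivalent: "trivalent_map D \<alpha> \<sigma>"
  using pm_graph unfolding pm_graph_def planar_map_def by blast

lemma finite_D: "finite D"
  and alpha_neq: "x \<in> D \<Longrightarrow> \<alpha> x \<noteq> x"
  and alpha_alpha: "x \<in> D \<Longrightarrow> \<alpha> (\<alpha> x) = x"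
  and sigma_neq: "x \<in> D \<Longrightarrow> \<sigma> x \<noteq> x"
  and sigma3: "x \<in> D \<Longrightarrow> \<sigma> (\<sigma> (\<sigma> x)) = x"
  using trivalent unfolding trivalent_map_def by blast+

lemma alpha_in: "x \<in> D \<Longrightarrow> \<alpha> x \<in> D"
  and sigma_in: "x \<in> D \<Longrightarrow> \<sigma> x \<in> D"
  and sigma_inj: "\<sigma> x = \<sigma> y \<Longrightarrow> x = y"
proof -
  have "\<alpha> permutes D" "\<sigma> permutes D" using trivalent unfolding trivalent_map_def by blast+
  then show "x \<in> D \<Longrightarrow> \<alpha> x \<in> D" "x \<in> D \<Longrightarrow> \<sigma> x \<in> D" "\<sigma> x = \<sigma> y \<Longrightarrow> x = y"
    by (simp_all add: permutes_in_image permutes_inj inj_eq)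
qed

lemma sigma2_neq: "x \<in> D \<Longrightarrow> \<sigma> (\<sigma> x) \<noteq> x"
  using sigma3 sigma_neq by (metis sigma_inj)

lemma sigma_neq_sigma2: "x \<in> D \<Longrightarrow> \<sigma> x \<noteq> \<sigma> (\<sigma> x)"
  using sigma_neq sigma_inj by metis

lemma ms_in_D: "i < n \<Longrightarrow> ms ! i \<in> D"
  using pm_graph unfolding pm_graph_def by auto

lemma ms_distinct: "i < n \<Longrightarrow> j < n \<Longrightarrow> i \<noteq> j \<Longrightarrow> ms ! j \<notin> {ms ! i, \<alpha> (ms ! i)}"
  using pm_graph unfolding pm_graph_def by blast

lemma MD_iff: "h \<in> MD \<longleftrightarrow> (\<exists>i < n. h = ms ! i \<or> h = \<alpha> (ms ! i))"
  unfolding match_darts_def by auto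

lemma MD_in_D: "h \<in> MD \<Longrightarrow> h \<in> D"
  using MD_iff ms_in_D alpha_in by auto

lemma ms_in_MD: "i < n \<Longrightarrow> {ms ! i, \<alpha> (ms ! i)} \<subseteq> MD"
  using MD_iff by auto

lemma alpha_MD: "h \<in> MD \<Longrightarrow> \<alpha> h \<in> MD"
  using MD_iff alpha_alpha ms_in_D by metis

lemma alpha_ND: "x \<in> ND \<Longrightarrow> \<alpha> x \<in> ND"
  using alpha_MD[of "\<alpha> x"] alpha_alpha[of x] alpha_in[of x] by auto

lemma unique_MD_at_vertex: "x \<in> D \<Longrightarrow> \<exists>!y. y \<in> {x, \<sigma> x, \<sigma> (\<sigma> x)} \<and> y \<in> MD"
  using pm_graph unfolding pm_graph_def by blast

lemma sigma_notin_MD: "h \<in> MD \<Longrightarrow> \<sigma> h \<notin> MD"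
  and sigma2_notin_MD: "h \<in> MD \<Longrightarrow> \<sigma> (\<sigma> h) \<notin> MD"
  using unique_MD_at_vertex[OF MD_in_D] sigma_neq[OF MD_in_D] sigma2_neq[OF MD_in_D] by blast+

lemma sigma_in_ND: "h \<in> MD \<Longrightarrow> \<sigma> h \<in> ND"
  and sigma2_in_ND: "h \<in> MD \<Longrightarrow> \<sigma> (\<sigma> h) \<in> ND"
  using sigma_notin_MD sigma2_notin_MD sigma_in MD_in_D by auto

lemma MD_eq_if_same_vertex:
  assumes "h \<in> MD" and "h' \<in> MD" and "x \<in> {\<sigma> h, \<sigma> (\<sigma> h)}" and "x \<in> {\<sigma> h', \<sigma> (\<sigma> h')}"
  shows "h = h'"
proof -
  have "h' \<in> {h, \<sigma> h, \<sigma> (\<sigma> h)}"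
  proof (cases "x = \<sigma> h'")
    case True
    then show ?thesis using assms(3) sigma_inj by blast
  next
    case False
    then have "\<sigma> (\<sigma> h') = x" using assms(4) by blast
    moreover have "\<sigma> (\<sigma> (\<sigma> h')) = h'" using sigma3 MD_in_D assms(2) by blast
    ultimately show ?thesis using assms(3) sigma_inj by auto
  qed
  then show ?thesis using unique_MD_at_vertex[OF MD_in_D[OF assms(1)]] assms(1,2) by blast
qed

lemma edge_index_eq:
  assumes "i < n" and "j < n" and "h \<in> {ms ! i, \<alpha> (ms ! i)}" and "h \<in> {ms ! j, \<alpha> (ms ! j)}"
  shows "i = j"
proof (rule ccontr)
  assume "i \<noteq> j"
  have "ms ! j = h \<or> ms ! j = \<alpha> h" using assms(4) alpha_alpha[OF ms_in_D[OF assms(2)]] by auto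
  moreover have "\<alpha> h \<in> {ms ! i, \<alpha> (ms ! i)}" using assms(3) alpha_alpha[OF ms_in_D[OF assms(1)]] by auto
  ultimately show False using ms_distinct[OF assms(1,2) \<open>i \<noteq> j\<close>] assms(3) by auto
qed

lemma res_pairs_cases:
  assumes "(x, y) \<in> res_pairs \<alpha> \<sigma> ms i b"
  obtains h where "h \<in> {ms ! i, \<alpha> (ms ! i)}" "x \<in> {\<sigma> h, \<sigma> (\<sigma> h)}" "y \<in> {\<sigma> (\<alpha> h), \<sigma> (\<sigma> (\<alpha> h))}"
proof -
  obtain h where "h \<in> {ms ! i, \<alpha> (ms ! i)}"
    "(x = \<sigma> h \<and> y = (if b then \<sigma> (\<alpha> h) else \<sigma> (\<sigma> (\<alpha> h)))) \<or>
     (x = \<sigma> (\<sigma> h) \<and> y = (if b then \<sigma> (\<sigma> (\<alpha> h)) else \<sigma> (\<alpha> h)))"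
    using assms unfolding res_pairs_def by blast
  then show thesis using that by (cases b) auto
qed

lemma res_pairs_in_ND:
  assumes "i < n" and "(x, y) \<in> res_pairs \<alpha> \<sigma> ms i b"
  shows "x \<in> ND" and "y \<in> ND"
proof -
  obtain h where h: "h \<in> {ms ! i, \<alpha> (ms ! i)}" "x \<in> {\<sigma> h, \<sigma> (\<sigma> h)}" "y \<in> {\<sigma> (\<alpha> h), \<sigma> (\<sigma> (\<alpha> h))}"
    using res_pairs_cases[OF assms(2)] .
  then have "h \<in> MD" "\<alpha> h \<in> MD" using ms_in_MD[OF assms(1)] alpha_MD by auto
  then show "x \<in> ND" "y \<in> ND" using h(2,3) sigma_in_ND sigma2_in_ND by auto
qed

lemma res_pairs_link_pairs:
  assumes "i < n"
  shows "res_pairs \<alpha> \<sigma> ms i b =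
    (if b then link_pairs (\<sigma> (ms ! i)) (\<sigma> (\<sigma> (ms ! i))) (\<sigma> (\<alpha> (ms ! i))) (\<sigma> (\<sigma> (\<alpha> (ms ! i))))
     else link_pairs (\<sigma> (ms ! i)) (\<sigma> (\<sigma> (ms ! i))) (\<sigma> (\<sigma> (\<alpha> (ms ! i)))) (\<sigma> (\<alpha> (ms ! i))))"
  by (rule res_pairs_eq_link_pairs) (simp_all add: alpha_alpha ms_in_D assms)

lemma res_pairs_sym: "i < n \<Longrightarrow> (x, y) \<in> res_pairs \<alpha> \<sigma> ms i b \<Longrightarrow> (y, x) \<in> res_pairs \<alpha> \<sigma> ms i b"
  unfolding res_pairs_link_pairs link_pairs_def by (auto split: if_splits)

definition matching_dart :: "'a \<Rightarrow> 'a" where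
  "matching_dart x = (if \<sigma> x \<in> MD then \<sigma> x else \<sigma> (\<sigma> x))"

definition twin :: "'a \<Rightarrow> 'a" where
  "twin x = (if \<sigma> x \<in> MD then \<sigma> (\<sigma> x) else \<sigma> x)"

lemma matching_dart:
  assumes "x \<in> ND"
  shows "matching_dart x \<in> MD" and "x \<in> {\<sigma> (matching_dart x), \<sigma> (\<sigma> (matching_dart x))}"
proof -
  have "\<sigma> x \<in> MD \<or> \<sigma> (\<sigma> x) \<in> MD" using unique_MD_at_vertex[of x] assms by auto
  then show "matching_dart x \<in> MD" unfolding matching_dart_def by auto
  show "x \<in> {\<sigma> (matching_dart x), \<sigma> (\<sigma> (matching_dart x))}"
    unfolding matching_dart_def using sigma3 assms by auto
qed

lemma matching_dart_eq:
  assumes "x \<in> ND" and "h \<in> MD" and "x \<in> {\<sigma> h, \<sigma> (\<sigma> h)}"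
  shows "matching_dart x = h"
  using MD_eq_if_same_vertex[OF matching_dart(1)[OF assms(1)] assms(2)
      matching_dart(2)[OF assms(1)] assms(3)] .

lemma twin:
  assumes "x \<in> ND"
  shows "twin x \<in> ND" and "twin x \<noteq> x" and "twin (twin x) = x"
    and "matching_dart (twin x) = matching_dart x"
proof -
  have x: "x \<in> D" "x \<notin> MD" using assms by auto
  have at_vertex: "twin x \<in> {\<sigma> (matching_dart x), \<sigma> (\<sigma> (matching_dart x))}"
    using sigma3[OF x(1)] unfolding twin_def matching_dart_def by auto
  show "twin x \<noteq> x"
    using sigma_neq[OF x(1)] sigma2_neq[OF x(1)] unfolding twin_def by auto
  have "twin x \<in> ND"
    using at_vertex sigma_in_ND[OF matching_dart(1)[OF assms]] sigma2_in_ND[OF matching_dart(1)[OF assms]]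
    by auto
  then show "twin x \<in> ND" "matching_dart (twin x) = matching_dart x"
    using matching_dart_eq[OF _ matching_dart(1)[OF assms] at_vertex] by auto
  show "twin (twin x) = x"
  proof (cases "\<sigma> x \<in> MD")
    case True
    then show ?thesis using x sigma3[OF x(1)] unfolding twin_def by simp
  next
    case False
    then have "\<sigma> (\<sigma> x) \<in> MD" using matching_dart(1)[OF assms] unfolding matching_dart_def by simp
    then show ?thesis using False sigma3[OF x(1)] unfolding twin_def by simp
  qed
qed

lemma twin_at_MD:
  assumes "h \<in> MD"
  shows "twin (\<sigma> h) = \<sigma> (\<sigma> h)" and "twin (\<sigma> (\<sigma> h)) = \<sigma> h"
  using sigma2_notin_MD[OF assms] assms sigma3[OF MD_in_D[OF assms]] unfolding twin_def by auto

lemma res_pairs_edge_eq: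
  assumes "i < n" and "j < n" and "(x, y) \<in> res_pairs \<alpha> \<sigma> ms i b" and "(x, y') \<in> res_pairs \<alpha> \<sigma> ms j b'"
  shows "i = j"
proof -
  obtain h where h: "h \<in> {ms ! i, \<alpha> (ms ! i)}" "x \<in> {\<sigma> h, \<sigma> (\<sigma> h)}"
    "y \<in> {\<sigma> (\<alpha> h), \<sigma> (\<sigma> (\<alpha> h))}"
    using res_pairs_cases[OF assms(3)] .
  obtain h' where h': "h' \<in> {ms ! j, \<alpha> (ms ! j)}" "x \<in> {\<sigma> h', \<sigma> (\<sigma> h')}"
    "y' \<in> {\<sigma> (\<alpha> h'), \<sigma> (\<sigma> (\<alpha> h'))}"
    using res_pairs_cases[OF assms(4)] .
  have "h \<in> MD" "h' \<in> MD" using h(1) h'(1) ms_in_MD[OF assms(1)] ms_in_MD[OF assms(2)] by auto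
  then have "h = h'" using MD_eq_if_same_vertex[OF _ _ h(2) h'(2)] by blast
  then show "i = j" using edge_index_eq[OF assms(1,2) h(1)] h'(1) by simp
qed

lemma res_pairs_functional:
  assumes "i < n" and "(x, y) \<in> res_pairs \<alpha> \<sigma> ms i b" and "(x, y') \<in> res_pairs \<alpha> \<sigma> ms i b"
  shows "y = y'"
proof -
  let ?m = "ms ! i"
  have MD: "?m \<in> MD" "\<alpha> ?m \<in> MD" using ms_in_MD[OF assms(1)] by auto
  have "\<not> (x \<in> {\<sigma> ?m, \<sigma> (\<sigma> ?m)} \<and> x \<in> {\<sigma> (\<alpha> ?m), \<sigma> (\<sigma> (\<alpha> ?m))})"
    using MD_eq_if_same_vertex[OF MD] alpha_neq[OF MD_in_D[OF MD(1)]] by metis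
  moreover have "\<sigma> ?m \<noteq> \<sigma> (\<sigma> ?m)" "\<sigma> (\<alpha> ?m) \<noteq> \<sigma> (\<sigma> (\<alpha> ?m))"
    using sigma_neq_sigma2 MD_in_D MD by auto
  ultimately show ?thesis
    using assms(2,3) unfolding res_pairs_link_pairs[OF assms(1)] link_pairs_def by (auto split: if_splits)
qed

definition res_partner :: "(nat \<Rightarrow> bool) \<Rightarrow> 'a \<Rightarrow> 'a" where
  "res_partner v x = (SOME y. \<exists>i < n. (x, y) \<in> res_pairs \<alpha> \<sigma> ms i (v i))"

lemma res_pairs_at_matching_dart:
  assumes "x \<in> ND" and "i < n" and "matching_dart x \<in> {ms ! i, \<alpha> (ms ! i)}"
  shows "\<exists>y. (x, y) \<in> res_pairs \<alpha> \<sigma> ms i b"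
  using matching_dart(2)[OF assms(1)] assms(3) unfolding res_pairs_def by blast

lemma res_partner:
  assumes "x \<in> ND"
  shows "\<exists>i < n. (x, res_partner v x) \<in> res_pairs \<alpha> \<sigma> ms i (v i)"
proof -
  obtain i where "i < n" "matching_dart x \<in> {ms ! i, \<alpha> (ms ! i)}"
    using matching_dart(1)[OF assms] MD_iff by blast
  then have "\<exists>y. \<exists>i < n. (x, y) \<in> res_pairs \<alpha> \<sigma> ms i (v i)"
    using res_pairs_at_matching_dart[OF assms] by blast
  then show ?thesis unfolding res_partner_def by (rule someI_ex)
qed

lemma res_partner_eq:
  assumes "i < n" and "(x, y) \<in> res_pairs \<alpha> \<sigma> ms i (v i)"
  shows "res_partner v x = y"
proof -
  obtain j where j: "j < n" "(x, res_partner v x) \<in> res_pairs \<alpha> \<sigma> ms j (v j)"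
    using res_partner res_pairs_in_ND[OF assms] by blast
  have "j = i" using res_pairs_edge_eq[OF j(1) assms(1) j(2) assms(2)] .
  then show ?thesis using res_pairs_functional[OF assms(1) _ assms(2)] j(2) by blast
qed

lemma res_partner_res_partner:
  assumes "x \<in> ND"
  shows "res_partner v (res_partner v x) = x"
proof -
  obtain i where "i < n" "(x, res_partner v x) \<in> res_pairs \<alpha> \<sigma> ms i (v i)"
    using res_partner[OF assms] by blast
  then show ?thesis using res_partner_eq res_pairs_sym by blast
qed

lemma res_partner_at:
  assumes "x \<in> ND" and "i < n" and "(x, y) \<in> res_pairs \<alpha> \<sigma> ms i b"
  shows "matching_dart x \<in> {ms ! i, \<alpha> (ms ! i)}"
    and "y \<in> {\<sigma> (\<alpha> (matching_dart x)), \<sigma> (\<sigma> (\<alpha> (matching_dart x)))}"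
proof -
  obtain h where h: "h \<in> {ms ! i, \<alpha> (ms ! i)}" "x \<in> {\<sigma> h, \<sigma> (\<sigma> h)}" "y \<in> {\<sigma> (\<alpha> h), \<sigma> (\<sigma> (\<alpha> h))}"
    using res_pairs_cases[OF assms(3)] .
  have "h = matching_dart x" using matching_dart_eq[OF assms(1) _ h(2)] h(1) ms_in_MD[OF assms(2)] by auto
  then show "matching_dart x \<in> {ms ! i, \<alpha> (ms ! i)}"
    "y \<in> {\<sigma> (\<alpha> (matching_dart x)), \<sigma> (\<sigma> (\<alpha> (matching_dart x)))}"
    using h by auto
qed

lemma res_partner_neq:
  assumes "x \<in> ND"
  shows "res_partner v x \<noteq> x"
proof
  assume fixed: "res_partner v x = x"
  obtain i where i: "i < n" "(x, res_partner v x) \<in> res_pairs \<alpha> \<sigma> ms i (v i)"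
    using res_partner[OF assms] by blast
  have "x \<in> {\<sigma> (\<alpha> (matching_dart x)), \<sigma> (\<sigma> (\<alpha> (matching_dart x)))}"
    using res_partner_at(2)[OF assms i] fixed by simp
  then have "matching_dart x = \<alpha> (matching_dart x)"
    using MD_eq_if_same_vertex[OF matching_dart(1)[OF assms] alpha_MD[OF matching_dart(1)[OF assms]]
        matching_dart(2)[OF assms]]
    by blast
  then show False using alpha_neq[OF MD_in_D[OF matching_dart(1)[OF assms]]] by simp
qed

lemma res_partner_at_edge:
  assumes "x \<in> ND" and "i < n" and "matching_dart x \<in> {ms ! i, \<alpha> (ms ! i)}"
  shows "(x, res_partner v x) \<in> res_pairs \<alpha> \<sigma> ms i (v i)"
proof -
  obtain j where j: "j < n" "(x, res_partner v x) \<in> res_pairs \<alpha> \<sigma> ms j (v j)"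
    using res_partner[OF assms(1)] by blast
  have "j = i" using edge_index_eq[OF j(1) assms(2) res_partner_at(1)[OF assms(1) j] assms(3)] .
  then show ?thesis using j by simp
qed

end

section \<open>The flip move\<close>

locale flip_setting = perfect_matching_graph +
  fixes S and \<sigma>'
  assumes S_subset: "S \<subseteq> D" and sigma_S: "\<And>x. x \<in> S \<Longrightarrow> \<sigma> x \<in> S"
    and card_boundary: "card {x \<in> S. \<alpha> x \<notin> S} \<le> 2"
    and sigma'_eq: "\<And>x. \<sigma>' x = (if x \<in> S then \<sigma> (\<sigma> x) else \<sigma> x)"
begin

lemma sigma_in_S_iff:
  assumes "x \<in> D"
  shows "\<sigma> x \<in> S \<longleftrightarrow> x \<in> S" and "\<sigma> (\<sigma> x) \<in> S \<longleftrightarrow> x \<in> S"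
proof -
  show "\<sigma> x \<in> S \<longleftrightarrow> x \<in> S" using sigma_S sigma3[OF assms] by metis
  then show "\<sigma> (\<sigma> x) \<in> S \<longleftrightarrow> x \<in> S" using sigma_S sigma3[OF assms] by metis
qed

lemma sigma'_sigma':
  assumes "h \<in> D"
  shows "\<sigma>' (\<sigma>' h) = (if h \<in> S then \<sigma> h else \<sigma> (\<sigma> h))"
  using sigma_in_S_iff[OF assms] sigma3[OF sigma_in[OF assms]] by (simp add: sigma'_eq)

definition crossing :: "nat \<Rightarrow> bool" where
  "crossing i \<longleftrightarrow> (ms ! i \<in> S) \<noteq> (\<alpha> (ms ! i) \<in> S)"

definition toggle :: "(nat \<Rightarrow> bool) \<Rightarrow> nat \<Rightarrow> bool" where
  "toggle v i = (if crossing i then \<not> v i else v i)"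

text \<open>Reversing the rotation at both ends of a matching edge only relabels its two strands;
  reversing it at one end exchanges the 0- and the 1-resolution.\<close>
lemma res_pairs_flip:
  assumes "i < n"
  shows "res_pairs \<alpha> \<sigma>' ms i (v i) = res_pairs \<alpha> \<sigma> ms i (toggle v i)"
proof -
  let ?m = "ms ! i"
  have D: "?m \<in> D" "\<alpha> ?m \<in> D" using ms_in_D[OF assms] alpha_in by auto
  have flipped: "res_pairs \<alpha> \<sigma>' ms i b =
    (if b then link_pairs (\<sigma>' ?m) (\<sigma>' (\<sigma>' ?m)) (\<sigma>' (\<alpha> ?m)) (\<sigma>' (\<sigma>' (\<alpha> ?m)))
     else link_pairs (\<sigma>' ?m) (\<sigma>' (\<sigma>' ?m)) (\<sigma>' (\<sigma>' (\<alpha> ?m))) (\<sigma>' (\<alpha> ?m)))" for b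
    by (rule res_pairs_eq_link_pairs) (simp_all add: alpha_alpha D)
  show ?thesis
    unfolding flipped res_pairs_link_pairs[OF assms] toggle_def crossing_def
      sigma'_sigma'[OF D(1)] sigma'_sigma'[OF D(2)]
    unfolding sigma'_eq[of ?m] sigma'_eq[of "\<alpha> ?m"]
    by (cases "?m \<in> S"; cases "\<alpha> ?m \<in> S"; cases "v i") (simp_all add: link_pairs_swap[of "\<sigma> (\<sigma> ?m)"])
qed

lemma res_link_flip: "res_link D \<alpha> \<sigma>' ms v = res_link D \<alpha> \<sigma> ms (toggle v)"
  unfolding res_link_eq_res_pairs using res_pairs_flip by auto

definition crossing_edges :: "nat set" where
  "crossing_edges = {i. i < n \<and> crossing i}"

definition inner_dart :: "nat \<Rightarrow> 'a" where
  "inner_dart i = (if ms ! i \<in> S then ms ! i else \<alpha> (ms ! i))"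

lemma inner_dart:
  assumes "i \<in> crossing_edges"
  shows "inner_dart i \<in> S" and "\<alpha> (inner_dart i) \<notin> S" and "inner_dart i \<in> MD" and "\<alpha> (inner_dart i) \<in> MD"
    and "{inner_dart i, \<alpha> (inner_dart i)} = {ms ! i, \<alpha> (ms ! i)}"
proof -
  have i: "i < n" "crossing i" using assms unfolding crossing_edges_def by auto
  have "\<alpha> (\<alpha> (ms ! i)) = ms ! i" using alpha_alpha[OF ms_in_D[OF i(1)]] .
  then show "inner_dart i \<in> S" "\<alpha> (inner_dart i) \<notin> S" "inner_dart i \<in> MD" "\<alpha> (inner_dart i) \<in> MD"
    "{inner_dart i, \<alpha> (inner_dart i)} = {ms ! i, \<alpha> (ms ! i)}"
    using i(2) ms_in_MD[OF i(1)] unfolding inner_dart_def crossing_def by auto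
qed

lemma card_crossing_edges: "card crossing_edges \<le> 2"
proof -
  have inj: "inj_on inner_dart crossing_edges"
  proof (rule inj_onI)
    fix i j assume "i \<in> crossing_edges" "j \<in> crossing_edges" "inner_dart i = inner_dart j"
    then show "i = j"
      using inner_dart(5) edge_index_eq[of i j "inner_dart i"] unfolding crossing_edges_def by blast
  qed
  have "inner_dart ` crossing_edges \<subseteq> {x \<in> S. \<alpha> x \<notin> S}" using inner_dart(1,2) by auto
  moreover have "finite {x \<in> S. \<alpha> x \<notin> S}" using finite_subset[OF S_subset finite_D] by simp
  ultimately have "card crossing_edges \<le> card {x \<in> S. \<alpha> x \<notin> S}" by (rule card_inj_on_le[OF inj])
  then show ?thesis using card_boundary by simp
qed

lemma res_pairs_crossing:
  assumes "i \<in> crossing_edges"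
  shows "res_pairs \<alpha> \<sigma> ms i b =
    (if b then link_pairs (\<sigma> (inner_dart i)) (\<sigma> (\<sigma> (inner_dart i)))
        (\<sigma> (\<alpha> (inner_dart i))) (\<sigma> (\<sigma> (\<alpha> (inner_dart i))))
     else link_pairs (\<sigma> (inner_dart i)) (\<sigma> (\<sigma> (inner_dart i)))
        (\<sigma> (\<sigma> (\<alpha> (inner_dart i)))) (\<sigma> (\<alpha> (inner_dart i))))"
proof -
  have i: "i < n" using assms unfolding crossing_edges_def by auto
  show ?thesis
  proof (cases "ms ! i \<in> S")
    case True
    then show ?thesis unfolding inner_dart_def res_pairs_link_pairs[OF i] by simp
  next
    case False
    then show ?thesis
      unfolding inner_dart_def res_pairs_link_pairs[OF i] using alpha_alpha[OF ms_in_D[OF i]]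
      by (simp add: link_pairs_def) blast
  qed
qed

lemma in_S_iff_matching_dart:
  assumes "x \<in> ND"
  shows "x \<in> S \<longleftrightarrow> matching_dart x \<in> S"
  using matching_dart(2)[OF assms] sigma_in_S_iff[OF MD_in_D[OF matching_dart(1)[OF assms]]] by auto

lemma res_pairs_side:
  assumes "i < n" and "(x, y) \<in> res_pairs \<alpha> \<sigma> ms i b"
  shows "(x \<in> S \<longleftrightarrow> y \<in> S) \<longleftrightarrow> \<not> crossing i"
proof -
  obtain h where h: "h \<in> {ms ! i, \<alpha> (ms ! i)}" "x \<in> {\<sigma> h, \<sigma> (\<sigma> h)}" "y \<in> {\<sigma> (\<alpha> h), \<sigma> (\<sigma> (\<alpha> h))}"
    using res_pairs_cases[OF assms(2)] .
  have "h \<in> D" "\<alpha> h \<in> D" using h(1) ms_in_MD[OF assms(1)] alpha_MD MD_in_D by auto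
  then have "x \<in> S \<longleftrightarrow> h \<in> S" "y \<in> S \<longleftrightarrow> \<alpha> h \<in> S" using h(2,3) sigma_in_S_iff by auto
  moreover have "crossing i \<longleftrightarrow> (h \<in> S) \<noteq> (\<alpha> h \<in> S)"
    using h(1) alpha_alpha[OF ms_in_D[OF assms(1)]] unfolding crossing_def by auto
  ultimately show ?thesis by blast
qed

definition fixed_links :: "(nat \<Rightarrow> bool) \<Rightarrow> ('a \<times> 'a) set" where
  "fixed_links v = {(x, y). x \<in> ND \<and> y = \<alpha> x} \<union>
     {(x, y). \<exists>i < n. \<not> crossing i \<and> (x, y) \<in> res_pairs \<alpha> \<sigma> ms i (v i)}"

definition crossing_links :: "(nat \<Rightarrow> bool) \<Rightarrow> ('a \<times> 'a) set" where
  "crossing_links v = (\<Union>i \<in> crossing_edges. res_pairs \<alpha> \<sigma> ms i (v i))"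

lemma res_link_split: "res_link D \<alpha> \<sigma> ms v = fixed_links v \<union> crossing_links v"
  unfolding res_link_eq_res_pairs fixed_links_def crossing_links_def crossing_edges_def
  using alpha_ND res_pairs_in_ND by blast

lemma fixed_links_toggle: "fixed_links (toggle v) = fixed_links v"
  unfolding fixed_links_def toggle_def by auto

lemma fixed_links_subset: "fixed_links v \<subseteq> ND \<times> ND"
  unfolding fixed_links_def using alpha_ND res_pairs_in_ND by blast

lemma fixed_linksE:
  assumes "(x, y) \<in> fixed_links v"
  obtains "x \<in> ND" "y = \<alpha> x"
  | i where "i < n" "\<not> crossing i" "(x, y) \<in> res_pairs \<alpha> \<sigma> ms i (v i)"
  using assms unfolding fixed_links_def by blast

lemma sym_fixed_links: "sym (fixed_links v)"
proof (rule symI)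
  fix x y assume "(x, y) \<in> fixed_links v"
  then show "(y, x) \<in> fixed_links v"
  proof (cases rule: fixed_linksE)
    case 1
    then have "y \<in> ND" "x = \<alpha> y" using alpha_ND alpha_alpha by auto
    then show ?thesis unfolding fixed_links_def by blast
  next
    case (2 i)
    then show ?thesis using res_pairs_sym unfolding fixed_links_def by blast
  qed
qed

lemma non_matching_edge_same_side:
  assumes "crossing_edges \<noteq> {}" and "x \<in> ND"
  shows "x \<in> S \<longleftrightarrow> \<alpha> x \<in> S"
proof -
  let ?I = "ND \<inter> S" and ?K = "{x \<in> S. \<alpha> x \<notin> S}"
  have finite: "finite ?I" "finite ?K" using finite_D finite_subset[OF S_subset] by auto
  have "even (card ?I)"
  proof (rule even_card_involution[OF finite(1)])
    show "twin y \<in> ?I \<and> twin y \<noteq> y \<and> twin (twin y) = y" if "y \<in> ?I" for y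
      using that twin in_S_iff_matching_dart by auto
  qed
  then have "even (card {y \<in> ?I. \<alpha> y \<notin> ?I})"
    using even_card_iff_even_card_leaving[OF finite(1), of \<alpha>] alpha_neq alpha_alpha by auto
  moreover have "{y \<in> ?I. \<alpha> y \<notin> ?I} = ND \<inter> ?K" using alpha_ND by auto
  ultimately have even: "even (card (ND \<inter> ?K))" by simp
  obtain i where "i \<in> crossing_edges" using assms(1) by blast
  then have "inner_dart i \<in> ?K - ND" using inner_dart(1-3) by auto
  then have "card (ND \<inter> ?K) < card ?K"
    using finite(2) by (intro psubset_card_mono) auto
  moreover have "even k \<Longrightarrow> k < 2 \<Longrightarrow> k = 0" for k :: nat by presburger
  ultimately have "card (ND \<inter> ?K) = 0" using even card_boundary by simp
  then have "ND \<inter> ?K = {}" using finite(2) by simp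
  then show ?thesis using assms(2) alpha_ND[OF assms(2)] alpha_alpha[of x] by auto
qed

lemma fixed_links_same_side:
  assumes "crossing_edges \<noteq> {}" and "(x, y) \<in> (fixed_links v)\<^sup>*"
  shows "x \<in> S \<longleftrightarrow> y \<in> S"
  using assms(2)
proof (induction rule: rtrancl_induct)
  case (step y z)
  from step.hyps(2) have "y \<in> S \<longleftrightarrow> z \<in> S"
  proof (cases rule: fixed_linksE)
    case 1
    then show ?thesis using non_matching_edge_same_side[OF assms(1)] by simp
  next
    case (2 i)
    then show ?thesis using res_pairs_side by blast
  qed
  with step.IH show ?case by simp
qed simp

definition ports :: "'a set" where
  "ports = (\<Union>i \<in> crossing_edges.
     {\<sigma> (inner_dart i), \<sigma> (\<sigma> (inner_dart i)), \<sigma> (\<alpha> (inner_dart i)), \<sigma> (\<sigma> (\<alpha> (inner_dart i)))})"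

lemma ports_subset: "ports \<subseteq> ND"
  unfolding ports_def using inner_dart(3,4) sigma_in_ND sigma2_in_ND by auto

lemma crossing_links_subset: "crossing_links v \<subseteq> ports \<times> ports"
  unfolding crossing_links_def ports_def by (auto simp: res_pairs_crossing link_pairs_def)

lemma in_ports_iff:
  assumes "y \<in> ND" and "i < n" and "matching_dart y \<in> {ms ! i, \<alpha> (ms ! i)}"
  shows "y \<in> ports \<longleftrightarrow> crossing i"
proof
  assume "y \<in> ports"
  then obtain j where j: "j \<in> crossing_edges" "y \<in> {\<sigma> (inner_dart j), \<sigma> (\<sigma> (inner_dart j)),
      \<sigma> (\<alpha> (inner_dart j)), \<sigma> (\<sigma> (\<alpha> (inner_dart j)))}"
    unfolding ports_def by blast
  then obtain h where h: "h \<in> {inner_dart j, \<alpha> (inner_dart j)}" "y \<in> {\<sigma> h, \<sigma> (\<sigma> h)}" by blast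
  have "h \<in> MD" using h(1) inner_dart(3,4)[OF j(1)] by blast
  then have "matching_dart y = h" using matching_dart_eq[OF assms(1) _ h(2)] by simp
  moreover have "j < n" using j(1) unfolding crossing_edges_def by simp
  moreover have "h \<in> {ms ! j, \<alpha> (ms ! j)}" using h(1) inner_dart(5)[OF j(1)] by simp
  ultimately have "j = i" using edge_index_eq[OF _ assms(2) _ assms(3)] by simp
  then show "crossing i" using j(1) unfolding crossing_edges_def by simp
next
  assume "crossing i"
  then have i: "i \<in> crossing_edges" using assms(2) unfolding crossing_edges_def by simp
  have "matching_dart y \<in> {inner_dart i, \<alpha> (inner_dart i)}" using assms(3) inner_dart(5)[OF i] by simp
  then have "y \<in> {\<sigma> (inner_dart i), \<sigma> (\<sigma> (inner_dart i)), \<sigma> (\<alpha> (inner_dart i)), \<sigma> (\<sigma> (\<alpha> (inner_dart i)))}"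
    using matching_dart(2)[OF assms(1)] by auto
  then show "y \<in> ports" using i unfolding ports_def by blast
qed

text \<open>A component of the fixed links is closed under the edge involution, so it has even size,
  and the resolution partner leaves it exactly at its ports.\<close>
lemma even_card_ports_in_class:
  assumes "crossing_edges \<noteq> {}" and "x \<in> ND"
  shows "even (card ((fixed_links v)\<^sup>* `` {x} \<inter> ports))"
proof -
  define C where "C = (fixed_links v)\<^sup>* `` {x}"
  have C_ND: "C \<subseteq> ND"
  proof
    fix y assume "y \<in> C"
    then have "(x, y) \<in> (fixed_links v)\<^sup>*" unfolding C_def by simp
    then show "y \<in> ND" using assms(2) fixed_links_subset by (induction rule: rtrancl_induct) auto
  qed
  have finite: "finite C" using finite_subset[OF C_ND] finite_D by blast
  have closed: "z \<in> C" if "y \<in> C" "(y, z) \<in> fixed_links v" for y z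
    using that unfolding C_def by (auto intro: rtrancl_into_rtrancl)
  have no_exit: "{y \<in> C. \<alpha> y \<notin> C} = {}"
    using closed C_ND unfolding fixed_links_def by blast
  have "even (card C) \<longleftrightarrow> even (card {y \<in> C. \<alpha> y \<notin> C})"
    by (rule even_card_iff_even_card_leaving[OF finite]) (use C_ND alpha_neq alpha_alpha in auto)
  then have "even (card C)" unfolding no_exit by simp
  moreover have "{y \<in> C. res_partner v y \<notin> C} = C \<inter> ports"
  proof (intro set_eqI iffI)
    fix y assume y: "y \<in> C \<inter> ports"
    then have "y \<in> ND" using C_ND by blast
    then obtain i where i: "i < n" "matching_dart y \<in> {ms ! i, \<alpha> (ms ! i)}"
      using matching_dart(1) MD_iff by blast
    then have "crossing i" using in_ports_iff[OF \<open>y \<in> ND\<close>] y by blast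
    then have "y \<in> S \<longleftrightarrow> res_partner v y \<notin> S"
      using res_pairs_side res_partner_at_edge[OF \<open>y \<in> ND\<close> i] i(1) by blast
    then show "y \<in> {y \<in> C. res_partner v y \<notin> C}"
      using y fixed_links_same_side[OF assms(1)] unfolding C_def by blast
  next
    fix y assume y: "y \<in> {y \<in> C. res_partner v y \<notin> C}"
    then have "y \<in> ND" using C_ND by blast
    then obtain i where i: "i < n" "matching_dart y \<in> {ms ! i, \<alpha> (ms ! i)}"
      using matching_dart(1) MD_iff by blast
    have "(y, res_partner v y) \<notin> fixed_links v" using y closed by blast
    then have "crossing i"
      using res_partner_at_edge[OF \<open>y \<in> ND\<close> i] i(1) unfolding fixed_links_def by blast
    then show "y \<in> C \<inter> ports" using in_ports_iff[OF \<open>y \<in> ND\<close> i] y by blast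
  qed
  moreover have "even (card C) \<longleftrightarrow> even (card {y \<in> C. res_partner v y \<notin> C})"
    by (rule even_card_iff_even_card_leaving[OF finite])
      (use C_ND res_partner_neq res_partner_res_partner in auto)
  ultimately show ?thesis unfolding C_def by simp
qed

lemma outer_ports:
  "ports - S = (\<Union>i \<in> crossing_edges. {\<sigma> (\<alpha> (inner_dart i)), \<sigma> (\<sigma> (\<alpha> (inner_dart i)))})"
proof -
  have "\<sigma> h \<in> S \<longleftrightarrow> h \<in> S" "\<sigma> (\<sigma> h) \<in> S \<longleftrightarrow> h \<in> S" if "h \<in> MD" for h
    using sigma_in_S_iff[OF MD_in_D[OF that]] by auto
  then show ?thesis unfolding ports_def using inner_dart(1-4) by auto
qed

definition port_swap :: "'a \<Rightarrow> 'a" where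
  "port_swap x = (if x \<in> ports - S then twin x else x)"

lemma port_swap_at:
  assumes "i \<in> crossing_edges"
  defines "h \<equiv> inner_dart i"
  shows "port_swap (\<sigma> h) = \<sigma> h" and "port_swap (\<sigma> (\<sigma> h)) = \<sigma> (\<sigma> h)"
    and "port_swap (\<sigma> (\<alpha> h)) = \<sigma> (\<sigma> (\<alpha> h))" and "port_swap (\<sigma> (\<sigma> (\<alpha> h))) = \<sigma> (\<alpha> h)"
proof -
  have "\<sigma> h \<in> S" "\<sigma> (\<sigma> h) \<in> S"
    using inner_dart(1,3)[OF assms(1)] sigma_in_S_iff MD_in_D unfolding h_def by auto
  then show "port_swap (\<sigma> h) = \<sigma> h" "port_swap (\<sigma> (\<sigma> h)) = \<sigma> (\<sigma> h)"
    unfolding port_swap_def by auto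
  have "{\<sigma> (\<alpha> h), \<sigma> (\<sigma> (\<alpha> h))} \<subseteq> ports - S"
    using assms(1) unfolding outer_ports h_def by blast
  then show "port_swap (\<sigma> (\<alpha> h)) = \<sigma> (\<sigma> (\<alpha> h))" "port_swap (\<sigma> (\<sigma> (\<alpha> h))) = \<sigma> (\<alpha> h)"
    using twin_at_MD[OF inner_dart(4)[OF assms(1)]] unfolding port_swap_def h_def by auto
qed

lemma port_swap_outer:
  assumes "x \<in> ports - S"
  shows "port_swap x \<in> ports - S" and "port_swap x \<noteq> x" and "port_swap (port_swap x) = x"
proof -
  obtain i where i: "i \<in> crossing_edges"
    and x: "x \<in> {\<sigma> (\<alpha> (inner_dart i)), \<sigma> (\<sigma> (\<alpha> (inner_dart i)))}"
    using assms unfolding outer_ports by blast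
  have "\<sigma> (\<alpha> (inner_dart i)) \<noteq> \<sigma> (\<sigma> (\<alpha> (inner_dart i)))"
    using sigma_neq_sigma2 MD_in_D inner_dart(4)[OF i] by blast
  then show "port_swap x \<in> ports - S" "port_swap x \<noteq> x" "port_swap (port_swap x) = x"
    using x port_swap_at[OF i] i unfolding outer_ports by auto
qed

lemma port_swap_port_swap: "port_swap (port_swap x) = x"
proof (cases "x \<in> ports - S")
  case True
  then show ?thesis by (rule port_swap_outer(3))
next
  case False
  then have "port_swap x = x" unfolding port_swap_def by auto
  then show ?thesis by simp
qed

lemma port_swap_ports:
  assumes "x \<in> ports"
  shows "port_swap x \<in> ports"
proof (cases "x \<in> ports - S")
  case True
  then show ?thesis using port_swap_outer(1) by blast
next
  case False
  then show ?thesis using assms unfolding port_swap_def by auto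
qed

lemma card_outer_ports: "card (ports - S) \<le> 4"
proof -
  have "card (ports - S) \<le>
      (\<Sum>i \<in> crossing_edges. card {\<sigma> (\<alpha> (inner_dart i)), \<sigma> (\<sigma> (\<alpha> (inner_dart i)))})"
    unfolding outer_ports by (rule card_UN_le) (simp add: crossing_edges_def)
  also have "\<dots> \<le> (\<Sum>i \<in> crossing_edges. 2)"
    by (rule sum_mono) (simp add: card_insert_if)
  finally show ?thesis using card_crossing_edges by simp
qed

lemma res_pairs_negate:
  assumes "i \<in> crossing_edges"
  shows "res_pairs \<alpha> \<sigma> ms i (\<not> b) = map_prod port_swap port_swap ` res_pairs \<alpha> \<sigma> ms i b"
  unfolding res_pairs_crossing[OF assms] by (simp add: image_map_prod_link_pairs port_swap_at[OF assms])

lemma crossing_links_toggle: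
  "crossing_links (toggle v) = map_prod port_swap port_swap ` crossing_links v"
  unfolding crossing_links_def image_UN
  using res_pairs_negate by (simp add: toggle_def crossing_edges_def)

lemma sym_crossing_links: "sym (crossing_links v)"
  unfolding crossing_links_def crossing_edges_def using res_pairs_sym by (auto intro!: symI)

lemma port_swap_preserves_fixed_links:
  assumes "p \<in> ports" and "q \<in> ports" and "(p, q) \<in> (fixed_links v)\<^sup>*"
  shows "(port_swap p, port_swap q) \<in> (fixed_links v)\<^sup>*"
proof -
  have crossing: "crossing_edges \<noteq> {}" using assms(1) unfolding ports_def by blast
  have side: "p \<in> S \<longleftrightarrow> q \<in> S" using fixed_links_same_side[OF crossing assms(3)] .
  show ?thesis
  proof (cases "p \<in> S")
    case True
    then show ?thesis using assms(3) side by (simp add: port_swap_def)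
  next
    case False
    have even: "even (card {w \<in> ports - S. (z, w) \<in> (fixed_links v)\<^sup>*})" if "z \<in> ports - S" for z
    proof -
      have "{w \<in> ports - S. (z, w) \<in> (fixed_links v)\<^sup>*} = (fixed_links v)\<^sup>* `` {z} \<inter> ports"
        using that fixed_links_same_side[OF crossing, of z] by auto
      then show ?thesis using even_card_ports_in_class[OF crossing] that ports_subset by auto
    qed
    have "finite (ports - S)" using finite_subset[OF _ finite_D] ports_subset by blast
    moreover have "p \<in> ports - S" "q \<in> ports - S" using False side assms(1,2) by auto
    ultimately show ?thesis
      using swap_preserves_equiv_with_even_classes[OF equiv_UNIV_rtrancl[OF sym_fixed_links] _
          card_outer_ports port_swap_outer(1,2,3) even] assms(3)
      by blast
  qed
qed

lemma num_circles_toggle: "num_circles D \<alpha> \<sigma> ms (toggle v) = num_circles D \<alpha> \<sigma> ms v"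
  unfolding num_circles_def res_link_split fixed_links_toggle crossing_links_toggle
  using card_quotient_rtrancl_Un_port_swap[OF _ sym_fixed_links sym_crossing_links crossing_links_subset
      ports_subset port_swap_ports port_swap_port_swap port_swap_preserves_fixed_links] finite_D
  by simp

lemma num_circles_flip: "num_circles D \<alpha> \<sigma>' ms v = num_circles D \<alpha> \<sigma> ms v"
  using num_circles_toggle unfolding num_circles_def res_link_flip by simp

end

theorem mainTheorem8:
  fixes D :: "'d set" and \<alpha> \<sigma> \<sigma>' :: "'d \<Rightarrow> 'd" and ms :: "'d list"
  assumes "pm_graph D \<alpha> \<sigma> ms"
    and "flip_move D \<alpha> \<sigma> \<sigma>'"
  shows "has_bad_face D \<alpha> \<sigma> ms \<longleftrightarrow> has_bad_face D \<alpha> \<sigma>' ms"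
proof -
  obtain S where "S \<subseteq> D" "\<forall>x\<in>S. \<sigma> x \<in> S" "card {x \<in> S. \<alpha> x \<notin> S} \<le> 2"
    "\<forall>x. \<sigma>' x = (if x \<in> S then \<sigma> (\<sigma> x) else \<sigma> x)"
    using assms(2) unfolding flip_move_def by blast
  then interpret flip_setting D \<alpha> \<sigma> ms S \<sigma>'
    using assms(1) by unfold_locales auto
  show ?thesis
    unfolding has_bad_face_def eta_arc_def Delta_arc_def m_arc_def num_circles_flip ..
qed

end
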